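(* Let $X,Y,Z$ be irreducible sofic shifts and $\Phi:X\to Y$, $\Psi:Y\to Z$ factor maps. If $\Psi\circ\Phi:X\to Z$ is right-continuing almost-everywhere with some retract, then $\Psi$ is right-continuing almost-everywhere with some retract.
   Context: Subshifts are closed shift-invariant subsets of $A^{\mathbb Z}$, $A$ finite, with shift $\sigma(x)_i=x_{i+1}$; a factor map is a continuous, shift-commuting, onto map. A point $y\in Y$ is left-transitive in $Y$ if $\{\sigma^i(y): i\le 0\}$ is dense in $Y$. For an integer $n\ge0$, a factor map $f:X\to Y$ is right-continuing almost-everywhere with retract $n$ if for every $x\in X$ and every left-transitive $y\in Y$ with $f(x)_i=y_i$ for all $i\le n$, there exists $x'\in X$ with $x'_i=x_i$ for all $i\le 0$ and $f(x')=y$; "with some retract" means this holds for some $n\ge0$. *)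

theory Defs
  imports Main
begin

text \<open>The topology is the product topology (discrete alphabet); convergence/continuity
  is expressed via agreement on central windows [-n,n].\<close>

definition shift :: "(int \<Rightarrow> 'a) \<Rightarrow> int \<Rightarrow> 'a" where
  "shift x = (\<lambda>i. x (i + 1))"

definition shift_pow :: "int \<Rightarrow> (int \<Rightarrow> 'a) \<Rightarrow> int \<Rightarrow> 'a" where
  "shift_pow k x = (\<lambda>i. x (i + k))"

definition agree_on_window :: "nat \<Rightarrow> (int \<Rightarrow> 'a) \<Rightarrow> (int \<Rightarrow> 'a) \<Rightarrow> bool" where
  "agree_on_window n x y \<longleftrightarrow> (\<forall>i. \<bar>i\<bar> \<le> int n \<longrightarrow> x i = y i)"

definition closed_shift_set :: "(int \<Rightarrow> 'a) set \<Rightarrow> bool" where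
  "closed_shift_set X \<longleftrightarrow>
     (\<forall>x. (\<forall>n. \<exists>x'\<in>X. agree_on_window n x x') \<longrightarrow> x \<in> X)"

definition subshift :: "(int \<Rightarrow> 'a::finite) set \<Rightarrow> bool" where
  "subshift X \<longleftrightarrow> closed_shift_set X \<and> shift ` X = X"

text \<open>Sofic shift: the set of label sequences of bi-infinite walks in a finite
  labelled graph (vertices are naturals, edges (u, label, v)).\<close>
definition sofic :: "(int \<Rightarrow> 'a::finite) set \<Rightarrow> bool" where
  "sofic X \<longleftrightarrow> (\<exists>E :: (nat \<times> 'a \<times> nat) set. finite E \<and>
     X = {x. \<exists>v :: int \<Rightarrow> nat. \<forall>i. (v i, x i, v (i + 1)) \<in> E})"

definition occurs_in :: "'a list \<Rightarrow> (int \<Rightarrow> 'a) \<Rightarrow> bool" where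
  "occurs_in w x \<longleftrightarrow> (\<exists>i. \<forall>k < length w. x (i + int k) = w ! k)"

definition language :: "(int \<Rightarrow> 'a) set \<Rightarrow> 'a list set" where
  "language X = {w. \<exists>x\<in>X. occurs_in w x}"

definition irreducible_shift :: "(int \<Rightarrow> 'a) set \<Rightarrow> bool" where
  "irreducible_shift X \<longleftrightarrow>
     (\<forall>u\<in>language X. \<forall>w\<in>language X. \<exists>v. u @ v @ w \<in> language X)"

definition shift_continuous_on ::
  "(int \<Rightarrow> 'a) set \<Rightarrow> ((int \<Rightarrow> 'a) \<Rightarrow> (int \<Rightarrow> 'b)) \<Rightarrow> bool" where
  "shift_continuous_on X f \<longleftrightarrow>
     (\<forall>x\<in>X. \<forall>n. \<exists>m. \<forall>x'\<in>X. agree_on_window m x x' \<longrightarrow> agree_on_window n (f x) (f x'))"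

definition factor_map ::
  "(int \<Rightarrow> 'a) set \<Rightarrow> (int \<Rightarrow> 'b) set \<Rightarrow> ((int \<Rightarrow> 'a) \<Rightarrow> (int \<Rightarrow> 'b)) \<Rightarrow> bool" where
  "factor_map X Y f \<longleftrightarrow>
     shift_continuous_on X f \<and> (\<forall>x\<in>X. f (shift x) = shift (f x)) \<and> f ` X = Y"

definition left_transitive :: "(int \<Rightarrow> 'b) set \<Rightarrow> (int \<Rightarrow> 'b) \<Rightarrow> bool" where
  "left_transitive Y y \<longleftrightarrow> y \<in> Y \<and>
     (\<forall>y'\<in>Y. \<forall>n. \<exists>i \<le> 0. agree_on_window n (shift_pow i y) y')"

definition rcae_retract ::
  "nat \<Rightarrow> (int \<Rightarrow> 'a) set \<Rightarrow> (int \<Rightarrow> 'b) set \<Rightarrow> ((int \<Rightarrow> 'a) \<Rightarrow> (int \<Rightarrow> 'b)) \<Rightarrow> bool" where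
  "rcae_retract n X Y f \<longleftrightarrow>
     (\<forall>x\<in>X. \<forall>y. left_transitive Y y \<and> (\<forall>i \<le> int n. f x i = y i) \<longrightarrow>
        (\<exists>x'\<in>X. (\<forall>i \<le> 0. x' i = x i) \<and> f x' = y))"

definition rcae ::
  "(int \<Rightarrow> 'a) set \<Rightarrow> (int \<Rightarrow> 'b) set \<Rightarrow> ((int \<Rightarrow> 'a) \<Rightarrow> (int \<Rightarrow> 'b)) \<Rightarrow> bool" where
  "rcae X Y f \<longleftrightarrow> (\<exists>n. rcae_retract n X Y f)"

end

theory Submission
  imports Defs "HOL-Library.FuncSet" "HOL-Library.Infinite_Set" "HOL-Library.Diagonal_Subsequence"
begin

text \<open>By compactness a factor map \<open>\<Phi>\<close> is a sliding block code, so it has some finite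
  anticipation \<open>a\<close>: the past of \<open>\<Phi> x\<close> up to time 0 depends only on the past of \<open>x\<close> up to
  time \<open>a\<close>. Given \<open>y\<close> and a left-transitive \<open>z\<close> agreeing with \<open>\<Psi> y\<close> up to time \<open>n + a\<close>, lift
  \<open>y\<close> to \<open>x\<close> and apply the right-continuing property of \<open>\<Psi> \<circ> \<Phi>\<close> (retract \<open>n\<close>) at time \<open>a\<close>
  instead of 0: this yields \<open>x'\<close> with the past of \<open>x\<close> up to time \<open>a\<close> and \<open>\<Psi> (\<Phi> x') = z\<close>, so
  \<open>\<Phi> x'\<close> has the past of \<open>y\<close> and witnesses retract \<open>n + a\<close> for \<open>\<Psi>\<close>.\<close>

lemma shift_pow_shift_pow: "shift_pow j (shift_pow k x) = shift_pow (j + k) x"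
  by (simp add: shift_pow_def algebra_simps)

lemma shift_pow_0 [simp]: "shift_pow 0 x = x"
  by (simp add: shift_pow_def)

lemma shift_pow_add_1: "shift_pow (i + 1) x = shift (shift_pow i x)"
  by (simp add: shift_pow_def shift_def algebra_simps)

lemma shift_pow_diff_1:
  assumes "shift_pow i x = shift u"
  shows "shift_pow (i - 1) x = u"
proof
  fix l
  have "shift_pow i x (l - 1) = shift u (l - 1)" using assms by simp
  then show "shift_pow (i - 1) x l = u l" by (simp add: shift_pow_def shift_def algebra_simps)
qed

lemma shift_pow_mem:
  assumes "shift ` X = X" and "x \<in> X"
  shows "shift_pow j x \<in> X"
proof (induction j rule: int_induct[where k = 0])
  case base
  show ?case using \<open>x \<in> X\<close> by simp
next
  case (step1 i)
  then show ?case using assms(1) by (auto simp: shift_pow_add_1)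
next
  case (step2 i)
  then obtain u where "u \<in> X" "shift_pow i x = shift u" using assms(1) by blast
  then show ?case by (simp add: shift_pow_diff_1)
qed

lemma shift_pow_commute:
  assumes "shift ` X = X" and commute: "\<forall>x\<in>X. f (shift x) = shift (f x)" and "x \<in> X"
  shows "f (shift_pow j x) = shift_pow j (f x)"
proof (induction j rule: int_induct[where k = 0])
  case base
  show ?case by simp
next
  case (step1 i)
  have "shift_pow i x \<in> X" using assms(1,3) by (rule shift_pow_mem)
  then show ?case using step1 commute by (simp add: shift_pow_add_1)
next
  case (step2 i)
  have "shift_pow i x \<in> X" using assms(1,3) by (rule shift_pow_mem)
  then obtain u where u: "u \<in> X" "shift_pow i x = shift u" using assms(1) by blast
  then have "shift_pow i (f x) = shift (f u)" using step2 commute by simp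
  then show ?case using u by (simp add: shift_pow_diff_1)
qed

lemma left_transitive_shift_pow:
  assumes "left_transitive Z z" and "shift ` Z = Z" and "0 \<le> j"
  shows "left_transitive Z (shift_pow j z)"
  unfolding left_transitive_def
proof (intro conjI ballI allI)
  show "shift_pow j z \<in> Z"
    using assms(1) by (intro shift_pow_mem[OF assms(2)]) (simp add: left_transitive_def)
  fix z' n
  assume "z' \<in> Z"
  then obtain i where "i \<le> 0" "agree_on_window n (shift_pow i z) z'"
    using assms(1) unfolding left_transitive_def by blast
  then show "\<exists>i\<le>0. agree_on_window n (shift_pow i (shift_pow j z)) z'"
    using \<open>0 \<le> j\<close> by (intro exI[of _ "i - j"]) (simp add: shift_pow_shift_pow)
qed

lemma agree_on_window_iff_restrict:
  "agree_on_window m x y \<longleftrightarrow> restrict x {-int m..int m} = restrict y {-int m..int m}"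
  by (auto simp: agree_on_window_def restrict_def fun_eq_iff abs_le_iff)

lemma agree_on_windowI: "(\<And>i. \<bar>i\<bar> \<le> int m \<Longrightarrow> x i = y i) \<Longrightarrow> agree_on_window m x y"
  by (simp add: agree_on_window_def)

lemma agree_on_windowD: "agree_on_window m x y \<Longrightarrow> \<bar>i\<bar> \<le> int m \<Longrightarrow> x i = y i"
  by (simp add: agree_on_window_def)

lemma subseq_agree_on_window:
  fixes s :: "nat \<Rightarrow> int \<Rightarrow> 'a::finite"
  shows "\<exists>r :: nat \<Rightarrow> nat. strict_mono r \<and> (\<forall>k k'. agree_on_window m (s (r k)) (s (r k')))"
proof -
  let ?w = "\<lambda>k. restrict (s k) {-int m..int m}"
  have "range ?w \<subseteq> (\<Pi>\<^sub>E i\<in>{-int m..int m}. UNIV)" by auto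
  then have "finite (range ?w)" by (rule finite_subset) (simp add: finite_PiE)
  then obtain w where "infinite (?w -` {w} \<inter> UNIV)"
    by (rule inf_img_fin_domE') simp
  then have inf: "infinite {k. ?w k = w}" by (simp add: vimage_def)
  define r where "r = Infinite_Set.enumerate {k. ?w k = w}"
  have "strict_mono r" using strict_mono_enumerate[OF inf] by (simp add: r_def)
  moreover have "?w (r k) = w" for k using enumerate_in_set[OF inf] by (simp add: r_def)
  ultimately show ?thesis unfolding agree_on_window_iff_restrict by metis
qed

lemma convergent_subseq_shift_space:
  fixes s :: "nat \<Rightarrow> int \<Rightarrow> 'a::finite"
  obtains r x where "strict_mono (r :: nat \<Rightarrow> nat)"
    and "\<And>m. \<forall>\<^sub>F k in sequentially. agree_on_window m x (s (r k))"
proof -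
  interpret subseqs "\<lambda>m r. \<forall>k k'. agree_on_window m (s (r k)) (s (r k'))"
  proof unfold_locales
    fix m and t :: "nat \<Rightarrow> nat"
    assume "strict_mono t"
    show "\<exists>r :: nat \<Rightarrow> nat. strict_mono r \<and> (\<forall>k k'. agree_on_window m (s ((t \<circ> r) k)) (s ((t \<circ> r) k')))"
      using subseq_agree_on_window[of m "s \<circ> t"] by simp
  qed
  have tail: "agree_on_window m (s (diagseq (Suc m + k))) (s (diagseq (Suc m + k')))" for m k k'
  proof -
    have "\<forall>k k'. agree_on_window m (s ((diagseq \<circ> (+) (Suc m)) k)) (s ((diagseq \<circ> (+) (Suc m)) k'))"
      by (rule diagseq_holds) auto
    then show ?thesis by simp
  qed
  define x where "x i = s (diagseq (Suc (nat \<bar>i\<bar>))) i" for i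
  have tail_x: "agree_on_window m x (s (diagseq k))" if "m < k" for m k
  proof (rule agree_on_windowI)
    fix i :: int
    assume "\<bar>i\<bar> \<le> int m"
    then have "Suc (nat \<bar>i\<bar>) \<le> k" using \<open>m < k\<close> by linarith
    then obtain d where "k = Suc (nat \<bar>i\<bar>) + d" using le_Suc_ex by blast
    then have "agree_on_window (nat \<bar>i\<bar>) (s (diagseq (Suc (nat \<bar>i\<bar>)))) (s (diagseq k))"
      using tail[of "nat \<bar>i\<bar>" 0 d] by simp
    then show "x i = s (diagseq k) i" unfolding x_def by (rule agree_on_windowD) simp
  qed
  have "\<forall>\<^sub>F k in sequentially. agree_on_window m x (s (diagseq k))" for m
    using eventually_gt_at_top[of m] by (rule eventually_mono) (rule tail_x)
  with subseq_diagseq show thesis by (rule that)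
qed

lemma shift_continuous_on_uniformly:
  fixes X :: "(int \<Rightarrow> 'a::finite) set"
  assumes "closed_shift_set X" and "shift_continuous_on X f"
  obtains a where "\<And>x x'. x \<in> X \<Longrightarrow> x' \<in> X \<Longrightarrow> agree_on_window a x x' \<Longrightarrow> f x 0 = f x' 0"
proof (rule ccontr)
  assume "\<not> thesis"
  then have "\<forall>a. \<exists>p. fst p \<in> X \<and> snd p \<in> X \<and> agree_on_window a (fst p) (snd p) \<and> f (fst p) 0 \<noteq> f (snd p) 0"
    using that by fastforce
  then obtain p where p: "\<forall>a. fst (p a) \<in> X \<and> snd (p a) \<in> X \<and>
      agree_on_window a (fst (p a)) (snd (p a)) \<and> f (fst (p a)) 0 \<noteq> f (snd (p a)) 0"
    by (rule choice[THEN exE])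
  define s t where "s a = fst (p a)" and "t a = snd (p a)" for a
  have s: "\<And>a. s a \<in> X" and t: "\<And>a. t a \<in> X"
    and st: "\<And>a. agree_on_window a (s a) (t a)" and f_st: "\<And>a. f (s a) 0 \<noteq> f (t a) 0"
    using p by (simp_all add: s_def t_def)
  obtain r x where "strict_mono (r :: nat \<Rightarrow> nat)"
    and lim: "\<And>m. \<forall>\<^sub>F k in sequentially. agree_on_window m x (s (r k))"
    using convergent_subseq_shift_space[of s] by blast
  have "\<exists>x'\<in>X. agree_on_window n x x'" for n
  proof -
    obtain N where "\<And>k. N \<le> k \<Longrightarrow> agree_on_window n x (s (r k))"
      using lim[of n] by (auto simp: eventually_sequentially)
    then show ?thesis using s by blast
  qed
  then have "x \<in> X" using \<open>closed_shift_set X\<close> by (simp add: closed_shift_set_def)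
  then obtain m where m: "\<And>x'. x' \<in> X \<Longrightarrow> agree_on_window m x x' \<Longrightarrow> agree_on_window 0 (f x) (f x')"
    using \<open>shift_continuous_on X f\<close> unfolding shift_continuous_on_def by blast
  obtain N where N: "\<And>k. N \<le> k \<Longrightarrow> agree_on_window m x (s (r k))"
    using lim[of m] by (auto simp: eventually_sequentially)
  define k where "k = r (max N m)"
  have "max N m \<le> k" using seq_suble[OF \<open>strict_mono r\<close>] by (simp add: k_def)
  have xs: "agree_on_window m x (s k)" using N by (simp add: k_def)
  then have xt: "agree_on_window m x (t k)"
    using st[of k] \<open>max N m \<le> k\<close> by (auto simp: agree_on_window_def)
  have "f x 0 = f (s k) 0" using m[OF s xs] by (rule agree_on_windowD) simp
  moreover have "f x 0 = f (t k) 0" using m[OF t xt] by (rule agree_on_windowD) simp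
  ultimately show False using f_st[of k] by simp
qed

definition anticipation_bounded ::
  "nat \<Rightarrow> (int \<Rightarrow> 'a) set \<Rightarrow> ((int \<Rightarrow> 'a) \<Rightarrow> (int \<Rightarrow> 'b)) \<Rightarrow> bool" where
  "anticipation_bounded a X \<Phi> \<longleftrightarrow>
     (\<forall>x\<in>X. \<forall>x'\<in>X. (\<forall>i\<le>int a. x' i = x i) \<longrightarrow> (\<forall>i\<le>0. \<Phi> x' i = \<Phi> x i))"

lemma factor_map_anticipation_bounded:
  assumes "subshift X" and "factor_map X Y \<Phi>"
  shows "\<exists>a. anticipation_bounded a X \<Phi>"
proof -
  have X: "closed_shift_set X" "shift ` X = X" and \<Phi>: "shift_continuous_on X \<Phi>"
    "\<forall>x\<in>X. \<Phi> (shift x) = shift (\<Phi> x)"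
    using assms by (auto simp: subshift_def factor_map_def)
  obtain a where a: "\<And>x x'. x \<in> X \<Longrightarrow> x' \<in> X \<Longrightarrow> agree_on_window a x x' \<Longrightarrow> \<Phi> x 0 = \<Phi> x' 0"
    using shift_continuous_on_uniformly[OF X(1) \<Phi>(1)] by blast
  have "anticipation_bounded a X \<Phi>"
    unfolding anticipation_bounded_def
  proof (intro ballI allI impI)
    fix x x' and i :: int
    assume x: "x \<in> X" "x' \<in> X" and "\<forall>i\<le>int a. x' i = x i" and "i \<le> 0"
    then have "agree_on_window a (shift_pow i x') (shift_pow i x)"
      by (auto simp: agree_on_window_def shift_pow_def)
    then have "\<Phi> (shift_pow i x') 0 = \<Phi> (shift_pow i x) 0"
      by (rule a[OF shift_pow_mem[OF X(2) x(2)] shift_pow_mem[OF X(2) x(1)]])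
    then show "\<Phi> x' i = \<Phi> x i"
      using shift_pow_commute[OF X(2) \<Phi>(2)] x by (simp add: shift_pow_def)
  qed
  then show ?thesis ..
qed

lemma rcae_retract_right_factor:
  assumes "shift ` X = X" and "shift ` Z = Z"
    and \<Phi>: "factor_map X Y \<Phi>" and \<Psi>: "factor_map Y Z \<Psi>"
    and past: "anticipation_bounded a X \<Phi>"
    and retract: "rcae_retract n X Z (\<Psi> \<circ> \<Phi>)"
  shows "rcae_retract (n + a) Y Z \<Psi>"
  unfolding rcae_retract_def
proof (intro ballI allI impI, elim conjE)
  fix y z
  assume "y \<in> Y" and z: "left_transitive Z z" and yz: "\<forall>i\<le>int (n + a). \<Psi> y i = z i"
  have \<Phi>X: "\<Phi> ` X = Y" and \<Phi>_commute: "\<forall>x\<in>X. \<Phi> (shift x) = shift (\<Phi> x)"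
    using \<Phi> by (simp_all add: factor_map_def)
  have "shift ` Y = \<Phi> ` shift ` X"
    unfolding \<Phi>X[symmetric] image_image using \<Phi>_commute by (intro image_cong) auto
  then have shiftY: "shift ` Y = Y" using assms(1) \<Phi>X by simp
  have \<Phi>_shift: "\<Phi> (shift_pow j x) = shift_pow j (\<Phi> x)" if "x \<in> X" for j x
    using assms(1) \<Phi>_commute that by (rule shift_pow_commute)
  have \<Psi>_shift: "\<Psi> (shift_pow j y) = shift_pow j (\<Psi> y)" if "y \<in> Y" for j y
    using shiftY _ that by (rule shift_pow_commute) (use \<Psi> in \<open>simp add: factor_map_def\<close>)
  obtain x where "x \<in> X" "\<Phi> x = y" using \<open>y \<in> Y\<close> \<Phi>X by blast
  have "(\<Psi> \<circ> \<Phi>) (shift_pow a x) = shift_pow a (\<Psi> y)"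
    using \<open>x \<in> X\<close> \<open>\<Phi> x = y\<close> \<open>y \<in> Y\<close> by (simp add: \<Phi>_shift \<Psi>_shift)
  then have "\<forall>i\<le>int n. (\<Psi> \<circ> \<Phi>) (shift_pow a x) i = shift_pow a z i"
    using yz by (simp add: shift_pow_def)
  moreover have "left_transitive Z (shift_pow a z)"
    using z assms(2) by (rule left_transitive_shift_pow) simp
  moreover have "shift_pow a x \<in> X" using assms(1) \<open>x \<in> X\<close> by (rule shift_pow_mem)
  ultimately have "\<exists>w\<in>X. (\<forall>i\<le>0. w i = shift_pow a x i) \<and> (\<Psi> \<circ> \<Phi>) w = shift_pow a z"
    using retract unfolding rcae_retract_def by blast
  then obtain w where "w \<in> X" and w_past: "\<forall>i\<le>0. w i = shift_pow a x i"
    and w_image: "\<Psi> (\<Phi> w) = shift_pow a z"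
    by auto
  define x' where "x' = shift_pow (- a) w"
  have "x' \<in> X" unfolding x'_def using assms(1) \<open>w \<in> X\<close> by (rule shift_pow_mem)
  have "\<forall>i\<le>int a. x' i = x i"
    using w_past by (auto simp: x'_def shift_pow_def)
  then have "\<forall>i\<le>0. \<Phi> x' i = y i"
    using past \<open>x \<in> X\<close> \<open>x' \<in> X\<close> \<open>\<Phi> x = y\<close> unfolding anticipation_bounded_def by blast
  moreover have "\<Psi> (\<Phi> x') = shift_pow (- a) (\<Psi> (\<Phi> w))"
    using \<open>w \<in> X\<close> \<Phi>X by (auto simp: x'_def \<Phi>_shift \<Psi>_shift)
  then have "\<Psi> (\<Phi> x') = z" by (simp add: w_image shift_pow_shift_pow)
  ultimately show "\<exists>y'\<in>Y. (\<forall>i\<le>0. y' i = y i) \<and> \<Psi> y' = z"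
    using \<open>x' \<in> X\<close> \<Phi>X by blast
qed

theorem mainTheorem5:
  fixes X :: "(int \<Rightarrow> 'a::finite) set" and Y :: "(int \<Rightarrow> 'b::finite) set"
    and Z :: "(int \<Rightarrow> 'c::finite) set"
    and \<Phi> :: "(int \<Rightarrow> 'a) \<Rightarrow> (int \<Rightarrow> 'b)" and \<Psi> :: "(int \<Rightarrow> 'b) \<Rightarrow> (int \<Rightarrow> 'c)"
  assumes "subshift X" "sofic X" "irreducible_shift X"
    and "subshift Y" "sofic Y" "irreducible_shift Y"
    and "subshift Z" "sofic Z" "irreducible_shift Z"
    and "factor_map X Y \<Phi>" and "factor_map Y Z \<Psi>"
    and "rcae X Z (\<Psi> \<circ> \<Phi>)"
  shows "rcae Y Z \<Psi>"
proof -
  obtain n where n: "rcae_retract n X Z (\<Psi> \<circ> \<Phi>)"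
    using \<open>rcae X Z (\<Psi> \<circ> \<Phi>)\<close> unfolding rcae_def ..
  obtain a where past: "anticipation_bounded a X \<Phi>"
    using factor_map_anticipation_bounded[OF \<open>subshift X\<close> \<open>factor_map X Y \<Phi>\<close>] ..
  have "shift ` X = X" "shift ` Z = Z"
    using \<open>subshift X\<close> \<open>subshift Z\<close> by (simp_all add: subshift_def)
  then have "rcae_retract (n + a) Y Z \<Psi>"
    using \<open>factor_map X Y \<Phi>\<close> \<open>factor_map Y Z \<Psi>\<close> past n by (rule rcae_retract_right_factor)
  then show ?thesis unfolding rcae_def ..
qed

end
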